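(* Let $0 < \alpha < 10^{-6}$ and let $n, d \in \mathbb{N}$ satisfy $n/150 \le d \le n/3$. Let $V, W$ be a partition of a set of $n$ vertices with $|W| = d$ and $|V| = n-d$. Suppose that $H$ is a $3$-uniform hypergraph on vertex set $V \cup W$ in which every vertex is $\alpha$-good (with respect to $H_{n,d}(V,W)$). Then $H$ contains a matching of size $d$.
   Context: Given a partition $V, W$ of a set of $n$ vertices with $|W| = d \le n/3$, $H_{n,d}(V,W)$ denotes the $3$-uniform hypergraph on vertex set $V \cup W$ whose edges are exactly the $3$-sets with either exactly two vertices in $V$ and one in $W$, or exactly one vertex in $V$ and two in $W$. For a vertex $v$ of a $3$-uniform hypergraph $G$, $N_G(v)$ denotes the set of unordered pairs $\{a,b\}$ such that $\{v,a,b\}$ is an edge of $G$. For a $3$-uniform hypergraph $H$ on vertex set $V \cup W$, a vertex $v$ is $\alpha$-good if $|N_{H_{n,d}(V,W)}(v) \setminus N_H(v)| \le \alpha n^2$, and $\alpha$-bad otherwise. *)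

theory Defs
  imports Complex_Main "HOL-Library.Disjoint_Sets"
begin

definition three_graph :: "'a set \<Rightarrow> 'a set set \<Rightarrow> bool" where
  "three_graph X H \<longleftrightarrow> (\<forall>e\<in>H. e \<subseteq> X \<and> card e = 3)"

definition Hnd :: "'a set \<Rightarrow> 'a set \<Rightarrow> 'a set set" where
  "Hnd V W = {e. e \<subseteq> V \<union> W \<and> card e = 3 \<and>
      ((card (e \<inter> V) = 2 \<and> card (e \<inter> W) = 1) \<or> (card (e \<inter> V) = 1 \<and> card (e \<inter> W) = 2))}"

definition nbhd :: "'a set set \<Rightarrow> 'a \<Rightarrow> 'a set set" where
  "nbhd G v = {{a, b} | a b. {v, a, b} \<in> G}"

definition alpha_good :: "real \<Rightarrow> nat \<Rightarrow> 'a set \<Rightarrow> 'a set \<Rightarrow> 'a set set \<Rightarrow> 'a \<Rightarrow> bool" where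
  "alpha_good \<alpha> n V W H v \<longleftrightarrow> real (card (nbhd (Hnd V W) v - nbhd H v)) \<le> \<alpha> * (real n)^2"

definition matching :: "'a set set \<Rightarrow> 'a set set \<Rightarrow> bool" where
  "matching H M \<longleftrightarrow> M \<subseteq> H \<and> disjoint M"

end

theory Submission
  imports Defs
begin

(*
  Proof idea (an exchange argument for maximum "VVW matchings").  Call an edge with two vertices
  in V and one in W a VVW edge, and fix a matching M of VVW edges of H of maximum size k.
  If k >= d, any d edges of M form the required matching.  Otherwise some vertex w of W and
  (since |V| >= 2d > 2k) two vertices u1, u2 of V are uncovered, and maximality of M forces
  many edges of H_{n,d}(V,W) to be missing from H:
   (A) no edge {w,a,b} with a, b uncovered lies in H, so w misses binom(|V|-2k, 2) pairs;
   (B) for covered x, y of V in distinct edges {x,x',w_x}, {y,y',w_y} of M, one of the edges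
       {u1,x,w_y}, {u2,y,w_x}, {w,x',y'} is missing, since otherwise exchanging the two edges
       for these three enlarges M; each missing pair is charged at most twice, so
       2k(2k-2) <= 2 (miss(u1) + miss(u2) + miss(w)).
*)

lemma card_le_mult_if_fibres_bounded:
  assumes "finite B" and "f ` A \<subseteq> B" and "\<And>a. a \<in> A \<Longrightarrow> card {a' \<in> A. f a' = f a} \<le> m"
  shows "card A \<le> m * card B"
proof -
  have fibre_le: "card {a \<in> A. f a = b} \<le> m" if "b \<in> B" for b
  proof (cases "b \<in> f ` A")
    case True
    then obtain a where "a \<in> A" "b = f a" by blast
    then show ?thesis using assms(3) by blast
  next
    case False
    then have "{a \<in> A. f a = b} = {}" by blast
    then show ?thesis by (metis card.empty zero_le)
  qed
  have "A = (\<Union>b\<in>B. {a \<in> A. f a = b})" using assms(2) by auto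
  then have "card A \<le> (\<Sum>b\<in>B. card {a \<in> A. f a = b})"
    by (metis card_UN_le assms(1))
  also have "\<dots> \<le> (\<Sum>b\<in>B. m)" by (rule sum_mono) (rule fibre_le)
  finally show ?thesis by (simp add: mult.commute)
qed

lemma pairwise_disjnt_three:
  "disjnt A B \<Longrightarrow> disjnt A C \<Longrightarrow> disjnt B C \<Longrightarrow> disjoint {A, B, C}"
  unfolding pairwise_def using disjnt_sym by blast

text \<open>The final arithmetic: the bounds binom(u,2) <= a from (A) and 2k(2k-2) <= 6a from (B),
  with a < N^2/10^6, force (u + 2k)^2 <= 40a < (2N/3)^2, so u + 2k cannot reach 2N/3.\<close>
lemma few_missing_pairs_force_small_parts:
  fixes u k :: nat and a N :: real
  assumes u: "2 \<le> u" and pairs_u: "real (u choose 2) \<le> a"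
    and pairs_k: "real (2 * k * (2 * k - 2)) \<le> 6 * a"
    and a: "a < N^2 / 10^6" and N: "0 \<le> N" and large: "2 * N \<le> 3 * real (u + 2 * k)"
  shows False
proof -
  define U K where "U = real u" and "K = real k"
  have "2 * (u choose 2) = u * (u - 1)"
    by (cases "even u") (simp_all add: choose_two)
  moreover have "real (u * (u - 1)) = U * (U - 1)"
    using u unfolding U_def by (simp add: of_nat_diff)
  ultimately have U_a: "U * (U - 1) \<le> 2 * a"
    using pairs_u by (metis of_nat_mult of_nat_numeral mult_left_mono zero_le_numeral)
  have "real (2 * k * (2 * k - 2)) = 2 * K * (2 * K - 2)"
    unfolding K_def by (cases "k = 0") (simp_all add: of_nat_diff)
  then have K_a: "4 * K * (K - 1) \<le> 6 * a"
    using pairs_k by (simp add: algebra_simps)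
  have "U \<le> U * (U - 1)"
    using mult_left_mono[of 1 "U - 1" U] u unfolding U_def by simp
  then have U_sq: "U^2 \<le> 2 * (U * (U - 1))" and U_ge: "4 \<le> 2 * (U * (U - 1))"
    using u unfolding U_def by (simp add: power2_eq_square algebra_simps, linarith)
  have K_sq: "(2 * K)^2 \<le> 2 * (4 * K * (K - 1)) + 4"
    using zero_le_power2[of "K - 1"] by (simp add: power2_eq_square algebra_simps)
  have sum_sq: "(U + 2 * K)^2 \<le> 2 * U^2 + 2 * (2 * K)^2"
    using zero_le_power2[of "U - 2 * K"] by (simp add: power2_eq_square algebra_simps)
  have "0 \<le> a" using U_ge U_a by linarith
  have "(U + 2 * K)^2 \<le> 40 * a" using U_sq U_ge K_sq sum_sq U_a K_a by linarith
  also have "\<dots> < 4 * N^2 / 9"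
    using a \<open>0 \<le> a\<close> by (simp add: field_simps)
  also have "\<dots> \<le> (U + 2 * K)^2"
    using power_mono[OF large, of 2] N unfolding U_def K_def
    by (simp add: power2_eq_square algebra_simps)
  finally show False by simp
qed

locale vw_partition =
  fixes V W :: "'a set" and H :: "'a set set"
  assumes finite_V: "finite V" and finite_W: "finite W" and disjoint_VW: "V \<inter> W = {}"
begin

definition missing :: "'a \<Rightarrow> 'a set set" where
  "missing u = nbhd (Hnd V W) u - nbhd H u"

lemma finite_missing: "finite (missing u)"
proof -
  have "missing u \<subseteq> Pow (V \<union> W)"
    unfolding missing_def nbhd_def Hnd_def by auto
  then show ?thesis using finite_V finite_W finite_subset by blast
qed

lemma missing_pairI:
  assumes "{u, a, b} \<in> Hnd V W" and "{u, a, b} \<notin> H"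
  shows "{a, b} \<in> missing u"
proof -
  have "{a, b} \<notin> nbhd H u"
  proof
    assume "{a, b} \<in> nbhd H u"
    then obtain a' b' where "{a, b} = {a', b'}" "{u, a', b'} \<in> H" unfolding nbhd_def by blast
    then have "{u, a, b} \<in> H" by (metis insert_commute)
    with assms(2) show False by simp
  qed
  then show ?thesis using assms(1) unfolding missing_def nbhd_def by blast
qed

lemma VVW_in_Hnd:
  assumes "a \<in> V" "b \<in> V" "a \<noteq> b" "w \<in> W"
  shows "{a, b, w} \<in> Hnd V W"
proof -
  have "{a, b, w} \<inter> V = {a, b}" and "{a, b, w} \<inter> W = {w}" and "w \<noteq> a" "w \<noteq> b"
    using assms disjoint_VW by auto
  then show ?thesis unfolding Hnd_def using assms by auto
qed

lemma missing_at_V: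
  assumes "u \<in> V" "x \<in> V" "u \<noteq> x" "w \<in> W" "{u, x, w} \<notin> H"
  shows "{x, w} \<in> missing u"
  using missing_pairI VVW_in_Hnd assms by blast

lemma missing_at_W:
  assumes "w \<in> W" "a \<in> V" "b \<in> V" "a \<noteq> b" "{w, a, b} \<notin> H"
  shows "{a, b} \<in> missing w"
proof -
  have "{w, a, b} \<in> Hnd V W" using VVW_in_Hnd[OF assms(2-4,1)] by (simp add: insert_commute)
  then show ?thesis using missing_pairI assms(5) by blast
qed

definition vvw_edge :: "'a set \<Rightarrow> bool" where
  "vvw_edge e \<longleftrightarrow> e \<subseteq> V \<union> W \<and> card (e \<inter> V) = 2 \<and> card (e \<inter> W) = 1"

lemma vvw_edgeI:
  assumes "a \<in> V" "b \<in> V" "a \<noteq> b" "w \<in> W"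
  shows "vvw_edge {a, b, w}"
proof -
  have "{a, b, w} \<inter> V = {a, b}" and "{a, b, w} \<inter> W = {w}"
    using assms disjoint_VW by auto
  then show ?thesis unfolding vvw_edge_def using assms by auto
qed

definition vvw_matching :: "'a set set \<Rightarrow> bool" where
  "vvw_matching M \<longleftrightarrow> matching H M \<and> (\<forall>e\<in>M. vvw_edge e)"

lemma vvw_matching_finite: "vvw_matching M \<Longrightarrow> finite M"
proof -
  assume "vvw_matching M"
  then have "M \<subseteq> Pow (V \<union> W)" by (auto simp: vvw_matching_def vvw_edge_def)
  then show ?thesis using finite_V finite_W finite_subset by blast
qed

lemma vvw_matching_edge_eq:
  "vvw_matching M \<Longrightarrow> e \<in> M \<Longrightarrow> e' \<in> M \<Longrightarrow> z \<in> e \<Longrightarrow> z \<in> e' \<Longrightarrow> e = e'"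
  by (auto simp: vvw_matching_def matching_def pairwise_def disjnt_def)

lemma card_covered:
  assumes M: "vvw_matching M"
  shows "card (\<Union>M \<inter> V) = 2 * card M" and "card (\<Union>M \<inter> W) = card M"
proof -
  have count: "card (\<Union>M \<inter> X) = (\<Sum>e\<in>M. card (e \<inter> X))" if "finite X" for X
  proof -
    have "\<Union>M \<inter> X = (\<Union>e\<in>M. e \<inter> X)" by auto
    also have "card \<dots> = (\<Sum>e\<in>M. card (e \<inter> X))"
      using vvw_matching_finite[OF M] that vvw_matching_edge_eq[OF M]
      by (intro card_UN_disjoint) blast+
    finally show ?thesis .
  qed
  have "\<forall>e\<in>M. card (e \<inter> V) = 2 \<and> card (e \<inter> W) = 1"
    using M by (auto simp: vvw_matching_def vvw_edge_def)
  then show "card (\<Union>M \<inter> V) = 2 * card M" and "card (\<Union>M \<inter> W) = card M"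
    using count[OF finite_V] count[OF finite_W] by simp_all
qed

lemma card_uncovered_V:
  assumes "vvw_matching M"
  shows "card (V - \<Union>M) = card V - 2 * card M"
proof -
  have "V - \<Union>M = V - (\<Union>M \<inter> V)" by blast
  then show ?thesis using card_covered(1)[OF assms] finite_V by (simp add: card_Diff_subset)
qed

lemma uncovered_W_exists:
  assumes "vvw_matching M" and "card M < card W"
  shows "\<exists>w. w \<in> W - \<Union>M"
proof -
  have "card (\<Union>M \<inter> W) < card W" using card_covered(2)[OF assms(1)] assms(2) by simp
  moreover have "finite (\<Union>M \<inter> W)" using finite_W by simp
  ultimately have "\<not> W \<subseteq> \<Union>M \<inter> W" using card_mono not_le by metis
  then show ?thesis by blast
qed

lemma matching_of_size:
  assumes "vvw_matching M" and "k \<le> card M"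
  shows "\<exists>M'. matching H M' \<and> card M' = k"
proof -
  obtain M' where M': "M' \<subseteq> M" "card M' = k" using obtain_subset_with_card_n[OF assms(2)] by blast
  have "M \<subseteq> H" "disjoint M" using assms(1) by (auto simp: vvw_matching_def matching_def)
  then have "matching H M'" unfolding matching_def using M'(1) pairwise_subset by blast
  then show ?thesis using M'(2) by blast
qed

lemma vvw_matching_exchange:
  assumes M: "vvw_matching M" and R: "R \<subseteq> M" and F: "vvw_matching F"
    and apart: "\<Union>F \<inter> \<Union>(M - R) = {}"
  shows "vvw_matching (M - R \<union> F)" and "card (M - R \<union> F) = card M - card R + card F"
proof -
  have disj_M: "disjoint M" and disj_F: "disjoint F" and H_M: "M \<subseteq> H" and H_F: "F \<subseteq> H"
    using M F by (auto simp: vvw_matching_def matching_def)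
  have "disjoint (M - R \<union> F)"
    unfolding pairwise_def
  proof (intro ballI impI)
    fix a b assume "a \<in> M - R \<union> F" "b \<in> M - R \<union> F" "a \<noteq> b"
    then show "disjnt a b"
      using disj_M disj_F apart unfolding pairwise_def disjnt_def by blast
  qed
  then show "vvw_matching (M - R \<union> F)"
    using M F H_M H_F by (auto simp: vvw_matching_def matching_def)
  have "F \<inter> (M - R) = {}"
  proof -
    have "e \<noteq> {}" if "e \<in> F" for e
      using F that by (auto simp: vvw_matching_def vvw_edge_def)
    then show ?thesis using apart by blast
  qed
  then have "card (M - R \<union> F) = card (M - R) + card F"
    using vvw_matching_finite[OF M] vvw_matching_finite[OF F]
    by (subst card_Un_disjoint) auto
  then show "card (M - R \<union> F) = card M - card R + card F"
    using R vvw_matching_finite[OF M] by (simp add: card_Diff_subset finite_subset)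
qed

definition edge_of :: "'a set set \<Rightarrow> 'a \<Rightarrow> 'a set" where
  "edge_of M x = (THE e. e \<in> M \<and> x \<in> e)"

definition partner :: "'a set set \<Rightarrow> 'a \<Rightarrow> 'a" where
  "partner M x = the_elem (edge_of M x \<inter> V - {x})"

definition wmate :: "'a set set \<Rightarrow> 'a \<Rightarrow> 'a" where
  "wmate M x = the_elem (edge_of M x \<inter> W)"

lemma edge_of_eq:
  assumes "vvw_matching M" "e \<in> M" "x \<in> e"
  shows "edge_of M x = e"
  unfolding edge_of_def using assms vvw_matching_edge_eq by (intro the_equality) blast+

lemma covered_vertex:
  assumes M: "vvw_matching M" and x: "x \<in> \<Union>M \<inter> V"
  shows "edge_of M x \<in> M" and "edge_of M x \<inter> V = {x, partner M x}" and "partner M x \<noteq> x"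
    and "edge_of M x \<inter> W = {wmate M x}" and "edge_of M x = {x, partner M x, wmate M x}"
proof -
  obtain e where e: "e \<in> M" "x \<in> e" using x by blast
  then have e_eq: "edge_of M x = e" using edge_of_eq[OF M] by blast
  have edge: "e \<subseteq> V \<union> W" "card (e \<inter> V) = 2" "card (e \<inter> W) = 1"
    using M e by (auto simp: vvw_matching_def vvw_edge_def)
  have "card (e \<inter> V - {x}) = 1" using edge(2) e x by (simp add: card_Diff_singleton)
  then have V_part: "e \<inter> V - {x} = {partner M x}"
    unfolding partner_def e_eq by (metis card_1_singletonE the_elem_eq)
  have W_part: "e \<inter> W = {wmate M x}"
    using edge(3) unfolding wmate_def e_eq by (metis card_1_singletonE the_elem_eq)
  show "edge_of M x \<in> M" using e e_eq by simp
  show "edge_of M x \<inter> V = {x, partner M x}" "partner M x \<noteq> x"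
    using V_part e x unfolding e_eq by blast+
  show "edge_of M x \<inter> W = {wmate M x}" using W_part e_eq by simp
  show "edge_of M x = {x, partner M x, wmate M x}"
    using V_part W_part edge(1) e x unfolding e_eq by blast
qed

lemma partner_inj:
  assumes M: "vvw_matching M" and "x \<in> \<Union>M \<inter> V" "y \<in> \<Union>M \<inter> V"
    and eq: "partner M x = partner M y"
  shows "x = y"
proof -
  note cx = covered_vertex[OF M assms(2)] and cy = covered_vertex[OF M assms(3)]
  have "edge_of M x = edge_of M y"
    using vvw_matching_edge_eq[OF M cx(1) cy(1)] cx(5) cy(5) eq by blast
  then show ?thesis using cx(2,3) cy(2,3) eq by (metis doubleton_eq_iff)
qed

lemma wmate_eq_edge_eq:
  assumes M: "vvw_matching M" and "x \<in> \<Union>M \<inter> V" "y \<in> \<Union>M \<inter> V"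
    and eq: "wmate M x = wmate M y"
  shows "edge_of M x = edge_of M y"
proof -
  have "wmate M x \<in> edge_of M x" and "wmate M x \<in> edge_of M y"
    using covered_vertex(4)[OF M assms(2)] covered_vertex(4)[OF M assms(3)] eq by blast+
  then show ?thesis
    using vvw_matching_edge_eq[OF M covered_vertex(1)[OF M assms(2)] covered_vertex(1)[OF M assms(3)]]
    by blast
qed

definition cross_pairs :: "'a set set \<Rightarrow> ('a \<times> 'a) set" where
  "cross_pairs M = {(x, y). x \<in> \<Union>M \<inter> V \<and> y \<in> \<Union>M \<inter> V \<and> edge_of M x \<noteq> edge_of M y}"

lemma cross_pairs_sym: "(x, y) \<in> cross_pairs M \<longleftrightarrow> (y, x) \<in> cross_pairs M"
  unfolding cross_pairs_def by auto

lemma card_cross_pairs: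
  assumes M: "vvw_matching M"
  shows "card (cross_pairs M) = 2 * card M * (2 * card M - 2)"
proof -
  let ?C = "\<Union>M \<inter> V"
  have other: "card (?C - edge_of M x) = 2 * card M - 2" if x: "x \<in> ?C" for x
  proof -
    have "?C \<inter> edge_of M x = edge_of M x \<inter> V" using covered_vertex(1)[OF M x] by blast
    then have "card (?C \<inter> edge_of M x) = 2"
      using covered_vertex(2,3)[OF M x] by simp
    then show ?thesis
      using card_covered(1)[OF M] finite_V by (simp add: card_Diff_subset_Int)
  qed
  have same_edge: "y \<in> edge_of M x \<longleftrightarrow> edge_of M x = edge_of M y" if "x \<in> ?C" "y \<in> ?C" for x y
    using edge_of_eq[OF M covered_vertex(1)[OF M that(1)]] covered_vertex(5)[OF M that(2)] by auto
  have "cross_pairs M = (SIGMA x:?C. ?C - edge_of M x)"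
    unfolding cross_pairs_def using same_edge by auto
  then have "card (cross_pairs M) = (\<Sum>x\<in>?C. card (?C - edge_of M x))"
    using finite_V by simp
  also have "\<dots> = card ?C * (2 * card M - 2)" using other by simp
  finally show ?thesis using card_covered(1)[OF M] by simp
qed

text \<open>Charging in (B) at an uncovered V-vertex u: the configuration (x,y) is charged to the
  pair {x, w_y}, which determines x and the edge of y, hence (x,y) up to two choices.\<close>
lemma missing_count_at_V:
  assumes M: "vvw_matching M" and u: "u \<in> V - \<Union>M"
  shows "card {(x, y) \<in> cross_pairs M. {u, x, wmate M y} \<notin> H} \<le> 2 * card (missing u)"
    (is "card ?A \<le> _")
proof -
  define f where "f = (\<lambda>(x, y). {x, wmate M y})"
  have "f ` ?A \<subseteq> missing u"
  proof clarify
    fix x y assume xy: "(x, y) \<in> cross_pairs M" and not_in_H: "{u, x, wmate M y} \<notin> H"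
    have x: "x \<in> V" "u \<noteq> x" and y: "y \<in> \<Union>M \<inter> V"
      using xy u unfolding cross_pairs_def by auto
    have "wmate M y \<in> W" using covered_vertex(4)[OF M y] by blast
    then show "f (x, y) \<in> missing u"
      unfolding f_def using missing_at_V[OF _ x _ not_in_H] u by simp
  qed
  moreover have "card {q \<in> ?A. f q = f p} \<le> 2" if p: "p \<in> ?A" for p
  proof -
    obtain x0 y0 where p_eq: "p = (x0, y0)" and x0: "x0 \<in> V" and y0: "y0 \<in> \<Union>M \<inter> V"
      using p unfolding cross_pairs_def by blast
    have "{q \<in> ?A. f q = f p} \<subseteq> Pair x0 ` (edge_of M y0 \<inter> V)"
    proof
      fix q assume q: "q \<in> {q \<in> ?A. f q = f p}"
      then obtain x y where q_eq: "q = (x, y)" and x: "x \<in> V" and y: "y \<in> \<Union>M \<inter> V"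
        and eq: "{x, wmate M y} = {x0, wmate M y0}"
        unfolding cross_pairs_def p_eq f_def by auto
      have "wmate M y \<in> W" "wmate M y0 \<in> W" using covered_vertex(4)[OF M] y y0 by blast+
      then have "x = x0" and same_mate: "wmate M y = wmate M y0"
        using eq x x0 disjoint_VW by (auto simp: doubleton_eq_iff)
      moreover have "y \<in> edge_of M y0 \<inter> V"
        using wmate_eq_edge_eq[OF M y y0 same_mate] covered_vertex(5)[OF M y] y by auto
      ultimately show "q \<in> Pair x0 ` (edge_of M y0 \<inter> V)" using q_eq by blast
    qed
    then have "card {q \<in> ?A. f q = f p} \<le> card (Pair x0 ` (edge_of M y0 \<inter> V))"
      by (rule card_mono[rotated]) (use finite_V in simp)
    also have "\<dots> \<le> card (edge_of M y0 \<inter> V)" by (rule card_image_le) (use finite_V in simp)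
    also have "\<dots> = 2" using covered_vertex(2,3)[OF M y0] by simp
    finally show ?thesis .
  qed
  ultimately show ?thesis
    by (rule card_le_mult_if_fibres_bounded[OF finite_missing])
qed

text \<open>Charging in (B) at a W-vertex w: the configuration (x,y) is charged to the pair of
  partners {x', y'}, which determines (x,y) up to order since partners are unique.\<close>
lemma missing_count_at_W:
  assumes M: "vvw_matching M" and w: "w \<in> W"
  shows "card {(x, y) \<in> cross_pairs M. {w, partner M x, partner M y} \<notin> H} \<le> 2 * card (missing w)"
    (is "card ?A \<le> _")
proof -
  define f where "f = (\<lambda>(x, y). {partner M x, partner M y})"
  have "f ` ?A \<subseteq> missing w"
  proof clarify
    fix x y assume xy: "(x, y) \<in> cross_pairs M" and "{w, partner M x, partner M y} \<notin> H"
    moreover have "partner M x \<in> V" "partner M y \<in> V"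
      using xy covered_vertex(2)[OF M] unfolding cross_pairs_def by auto
    moreover have "partner M x \<noteq> partner M y"
      using xy partner_inj[OF M] unfolding cross_pairs_def by blast
    ultimately show "f (x, y) \<in> missing w"
      using missing_at_W w unfolding f_def by simp
  qed
  moreover have "card {q \<in> ?A. f q = f p} \<le> 2" if p: "p \<in> ?A" for p
  proof -
    obtain x0 y0 where p_eq: "p = (x0, y0)" and x0: "x0 \<in> \<Union>M \<inter> V" and y0: "y0 \<in> \<Union>M \<inter> V"
      using p unfolding cross_pairs_def by blast
    have "{q \<in> ?A. f q = f p} \<subseteq> {(x0, y0), (y0, x0)}"
    proof
      fix q assume q: "q \<in> {q \<in> ?A. f q = f p}"
      then obtain x y where q_eq: "q = (x, y)" and x: "x \<in> \<Union>M \<inter> V" and y: "y \<in> \<Union>M \<inter> V"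
        and eq: "{partner M x, partner M y} = {partner M x0, partner M y0}"
        unfolding cross_pairs_def p_eq f_def by auto
      then show "q \<in> {(x0, y0), (y0, x0)}"
        using partner_inj[OF M] x0 y0 by (auto simp: doubleton_eq_iff)
    qed
    then have "card {q \<in> ?A. f q = f p} \<le> card {(x0, y0), (y0, x0)}"
      by (rule card_mono[rotated]) simp
    also have "\<dots> \<le> 2" by (rule card_insert_le_m1) simp_all
    finally show ?thesis .
  qed
  ultimately show ?thesis
    by (rule card_le_mult_if_fibres_bounded[OF finite_missing])
qed

lemma maximum_vvw_matching_exists:
  "\<exists>M. vvw_matching M \<and> (\<forall>M'. vvw_matching M' \<longrightarrow> card M' \<le> card M)"
proof (rule ex_has_greatest_nat[where k = "{}" and b = "card (Pow (V \<union> W)) + 1"])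
  show "vvw_matching {}" by (simp add: vvw_matching_def matching_def)
  show "\<forall>M. vvw_matching M \<longrightarrow> card M < card (Pow (V \<union> W)) + 1"
  proof (intro allI impI)
    fix M assume "vvw_matching M"
    then have "M \<subseteq> Pow (V \<union> W)" by (auto simp: vvw_matching_def vvw_edge_def)
    then show "card M < card (Pow (V \<union> W)) + 1"
      using finite_V finite_W card_mono[of "Pow (V \<union> W)" M] by simp
  qed
qed

end

locale maximum_vvw_matching = vw_partition +
  fixes M :: "'a set set"
  assumes vvw: "vvw_matching M"
    and maximum: "\<And>M'. vvw_matching M' \<Longrightarrow> card M' \<le> card M"
begin

lemma no_improving_exchange:
  assumes "R \<subseteq> M" and "vvw_matching F" and "\<Union>F \<inter> \<Union>(M - R) = {}"
  shows "card F \<le> card R"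
proof -
  have "card R \<le> card M" using assms(1) vvw_matching_finite[OF vvw] by (simp add: card_mono)
  then show ?thesis
    using maximum[OF vvw_matching_exchange(1)[OF vvw assms]]
      vvw_matching_exchange(2)[OF vvw assms] by linarith
qed

lemma uncovered_pairs_missing:
  assumes w: "w \<in> W - \<Union>M"
  shows "card (V - \<Union>M) choose 2 \<le> card (missing w)"
proof -
  have "{B. B \<subseteq> V - \<Union>M \<and> card B = 2} \<subseteq> missing w"
  proof clarify
    fix B assume B: "B \<subseteq> V - \<Union>M" "card B = 2"
    then obtain a b where ab: "B = {a, b}" "a \<noteq> b" by (auto simp: card_2_iff)
    have a: "a \<in> V" and b: "b \<in> V" using B ab by auto
    have "{w, a, b} \<notin> H"
    proof
      assume "{w, a, b} \<in> H"
      then have "vvw_matching {{a, b, w}}"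
        using vvw_edgeI ab B w
        by (auto simp: vvw_matching_def matching_def insert_commute)
      moreover have "\<Union>{{a, b, w}} \<inter> \<Union>(M - {}) = {}" using ab B w by auto
      ultimately show False using no_improving_exchange[of "{}"] by fastforce
    qed
    then show "B \<in> missing w" using missing_at_W[OF _ a b ab(2)] w ab(1) by blast
  qed
  then have "card {B. B \<subseteq> V - \<Union>M \<and> card B = 2} \<le> card (missing w)"
    by (rule card_mono[OF finite_missing])
  then show ?thesis using finite_V by (simp add: n_subsets)
qed

text \<open>The exchange behind (B): for a cross pair (x,y), uncovered u1 /= u2 in V and an
  uncovered w in W, the three edges {u1,x,w_y}, {u2,y,w_x}, {w,x',y'} cannot all lie in H,
  as they would replace the two edges of M through x and y.\<close>
lemma cross_pair_blocked:
  assumes xy: "(x, y) \<in> cross_pairs M"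
    and u: "u1 \<in> V - \<Union>M" "u2 \<in> V - \<Union>M" "u1 \<noteq> u2" and w: "w \<in> W - \<Union>M"
  shows "{u1, x, wmate M y} \<notin> H \<or> {u2, y, wmate M x} \<notin> H \<or> {w, partner M x, partner M y} \<notin> H"
proof (rule ccontr)
  define F1 F2 F3 where "F1 = {u1, x, wmate M y}" and "F2 = {u2, y, wmate M x}"
    and "F3 = {partner M x, partner M y, w}"
  assume "\<not> ?thesis"
  then have in_H: "F1 \<in> H" "F2 \<in> H" "F3 \<in> H"
    unfolding F1_def F2_def F3_def by (simp_all add: insert_commute)
  have x: "x \<in> \<Union>M \<inter> V" and y: "y \<in> \<Union>M \<inter> V" and exy: "edge_of M x \<noteq> edge_of M y"
    using xy unfolding cross_pairs_def by auto
  note cx = covered_vertex[OF vvw x] and cy = covered_vertex[OF vvw y]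
  let ?ex = "edge_of M x" and ?ey = "edge_of M y"
  have apart: "?ex \<inter> ?ey = {}" using vvw_matching_edge_eq[OF vvw cx(1) cy(1)] exy by blast
  have fresh: "u1 \<notin> ?ex \<union> ?ey" "u2 \<notin> ?ex \<union> ?ey" "w \<notin> ?ex \<union> ?ey"
    using u w cx(1) cy(1) by blast+
  have in_ex: "x \<in> ?ex \<inter> V" "partner M x \<in> ?ex \<inter> V" "wmate M x \<in> ?ex \<inter> W"
    and in_ey: "y \<in> ?ey \<inter> V" "partner M y \<in> ?ey \<inter> V" "wmate M y \<in> ?ey \<inter> W"
    using cx(2,4) cy(2,4) by blast+
  have disj: "disjnt F1 F2" "disjnt F1 F3" "disjnt F2 F3"
    unfolding F1_def F2_def F3_def disjnt_def
    using in_ex in_ey apart fresh u(3) cx(3) cy(3) u w disjoint_VW by auto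
  then have "disjoint {F1, F2, F3}" by (rule pairwise_disjnt_three)
  moreover have "vvw_edge F1" "vvw_edge F2" "vvw_edge F3"
  proof -
    have "u1 \<noteq> x" using in_ex(1) fresh(1) by blast
    moreover have "u2 \<noteq> y" using in_ey(1) fresh(2) by blast
    moreover have "partner M x \<noteq> partner M y" using in_ex(2) in_ey(2) apart by auto
    ultimately show "vvw_edge F1" "vvw_edge F2" "vvw_edge F3"
      unfolding F1_def F2_def F3_def using in_ex in_ey u w by (auto intro!: vvw_edgeI)
  qed
  ultimately have F_matching: "vvw_matching {F1, F2, F3}"
    using in_H unfolding vvw_matching_def matching_def by auto
  have F_apart: "\<Union>{F1, F2, F3} \<inter> \<Union>(M - {?ex, ?ey}) = {}"
  proof -
    have "\<Union>{F1, F2, F3} \<subseteq> ?ex \<union> ?ey \<union> {u1, u2, w}"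
      unfolding F1_def F2_def F3_def using in_ex in_ey by auto
    moreover have "\<Union>(M - {?ex, ?ey}) \<inter> (?ex \<union> ?ey \<union> {u1, u2, w}) = {}"
      unfolding Union_disjoint
      using vvw_matching_edge_eq[OF vvw _ cx(1)] vvw_matching_edge_eq[OF vvw _ cy(1)] u w
      by blast
    ultimately show ?thesis by blast
  qed
  have "card {F1, F2, F3} = 3"
  proof -
    have "F1 \<noteq> {}" "F2 \<noteq> {}" "F3 \<noteq> {}" unfolding F1_def F2_def F3_def by simp_all
    then have "F1 \<noteq> F2" "F1 \<noteq> F3" "F2 \<noteq> F3" using disj by (auto simp: disjnt_def)
    then show ?thesis by simp
  qed
  moreover have "card {?ex, ?ey} = 2" using exy by simp
  moreover have "card {F1, F2, F3} \<le> card {?ex, ?ey}"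
    using no_improving_exchange[OF _ F_matching F_apart] cx(1) cy(1) by simp
  ultimately show False by simp
qed

lemma cross_pairs_missing:
  assumes u: "u1 \<in> V - \<Union>M" "u2 \<in> V - \<Union>M" "u1 \<noteq> u2" and w: "w \<in> W - \<Union>M"
  shows "card (cross_pairs M) \<le> 2 * card (missing u1) + 2 * card (missing u2) + 2 * card (missing w)"
proof -
  define A where "A u = {(x, y) \<in> cross_pairs M. {u, x, wmate M y} \<notin> H}" for u
  define A' where "A' = {(x, y) \<in> cross_pairs M. {u2, y, wmate M x} \<notin> H}"
  define B where "B = {(x, y) \<in> cross_pairs M. {w, partner M x, partner M y} \<notin> H}"
  have "cross_pairs M \<subseteq> V \<times> V" by (auto simp: cross_pairs_def)
  then have finite_pairs: "finite (cross_pairs M)" by (rule finite_subset) (simp add: finite_V)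
  have A'_eq: "A' = prod.swap ` A u2"
  proof (rule set_eqI)
    fix p :: "'a \<times> 'a"
    show "p \<in> A' \<longleftrightarrow> p \<in> prod.swap ` A u2"
      unfolding A_def A'_def by (cases p) (auto simp: image_iff cross_pairs_sym)
  qed
  have "finite (A u2)" using finite_pairs unfolding A_def by (rule finite_subset[rotated]) auto
  then have A'_le: "card A' \<le> card (A u2)" unfolding A'_eq by (rule card_image_le)
  have "cross_pairs M \<subseteq> A u1 \<union> A' \<union> B"
    unfolding A_def A'_def B_def using cross_pair_blocked[OF _ u w] by blast
  moreover have "A u1 \<union> A' \<union> B \<subseteq> cross_pairs M" unfolding A_def A'_def B_def by auto
  ultimately have split_pairs: "cross_pairs M = A u1 \<union> A' \<union> B" by (rule subset_antisym)
  have "card (cross_pairs M) \<le> card (A u1) + card A' + card B"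
    unfolding split_pairs using card_Un_le[of "A u1 \<union> A'" B] card_Un_le[of "A u1" A'] by linarith
  then have "card (cross_pairs M) \<le> card (A u1) + card (A u2) + card B"
    using A'_le by linarith
  moreover have "card (A u1) \<le> 2 * card (missing u1)" "card (A u2) \<le> 2 * card (missing u2)"
    using missing_count_at_V[OF vvw] u unfolding A_def by blast+
  moreover have "card B \<le> 2 * card (missing w)"
    using missing_count_at_W[OF vvw] w unfolding B_def by blast
  ultimately show ?thesis by linarith
qed

lemma pair_bounds_if_short:
  fixes a :: real
  assumes short: "card M < card W" and V_large: "2 * card W \<le> card V"
    and few: "\<forall>v \<in> V \<union> W. real (card (missing v)) \<le> a"
  shows "2 \<le> card (V - \<Union>M)" and "real (card (V - \<Union>M) choose 2) \<le> a"
    and "real (2 * card M * (2 * card M - 2)) \<le> 6 * a"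
proof -
  show two: "2 \<le> card (V - \<Union>M)" using card_uncovered_V[OF vvw] short V_large by linarith
  obtain w where w: "w \<in> W - \<Union>M" using uncovered_W_exists[OF vvw short] by blast
  then show "real (card (V - \<Union>M) choose 2) \<le> a"
    using uncovered_pairs_missing[OF w] few by force
  obtain B where B: "B \<subseteq> V - \<Union>M" "card B = 2" using two by (meson obtain_subset_with_card_n)
  then obtain u1 u2 where "B = {u1, u2}" and "u1 \<noteq> u2" by (meson card_2_iff)
  then have u: "u1 \<in> V - \<Union>M" "u2 \<in> V - \<Union>M" "u1 \<noteq> u2" using B(1) by auto
  have "2 * card M * (2 * card M - 2)
      \<le> 2 * card (missing u1) + 2 * card (missing u2) + 2 * card (missing w)"
    using cross_pairs_missing[OF u w] card_cross_pairs[OF vvw] by simp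
  then have "real (2 * card M * (2 * card M - 2))
      \<le> 2 * real (card (missing u1)) + 2 * real (card (missing u2)) + 2 * real (card (missing w))"
    using of_nat_mono[where 'a = real] by fastforce
  moreover have "real (card (missing u1)) \<le> a" "real (card (missing u2)) \<le> a"
    "real (card (missing w)) \<le> a"
    using few u w by blast+
  ultimately show "real (2 * card M * (2 * card M - 2)) \<le> 6 * a" by linarith
qed

end

theorem lemma4p2:
  fixes \<alpha> :: real and n d :: nat and V W :: "'a set" and H :: "'a set set"
  assumes "0 < \<alpha>" and "\<alpha> < 1 / 10^6"
    and "real n / 150 \<le> real d" and "real d \<le> real n / 3"
    and "finite V" and "finite W" and "V \<inter> W = {}"
    and "card (V \<union> W) = n" and "card W = d" and "card V = n - d"
    and "three_graph (V \<union> W) H"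
    and "\<forall>v \<in> V \<union> W. alpha_good \<alpha> n V W H v"
  shows "\<exists>M. matching H M \<and> card M = d"
proof -
  interpret vw_partition V W H using assms(5-7) by unfold_locales
  have n: "n = card V + d" using card_Un_disjoint[OF assms(5-7)] assms(8,9) by simp
  obtain M where M: "vvw_matching M" and max: "\<And>M'. vvw_matching M' \<Longrightarrow> card M' \<le> card M"
    using maximum_vvw_matching_exists by blast
  show ?thesis
  proof (cases "d \<le> card M")
    case True
    then show ?thesis using matching_of_size[OF M] by blast
  next
    case False
    interpret maximum_vvw_matching V W H M using M max by unfold_locales
    define a where "a = \<alpha> * (real n)^2"
    have few: "\<forall>v \<in> V \<union> W. real (card (missing v)) \<le> a"
      using assms(12) unfolding alpha_good_def missing_def a_def by blast
    have short: "card M < card W" and V_large: "2 * card W \<le> card V"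
      using False assms(4,9) n by linarith+
    note bounds = pair_bounds_if_short[OF short V_large few]
    have parts: "card (V - \<Union>M) + 2 * card M = card V"
      using card_uncovered_V[OF M] short V_large by linarith
    then have "0 < (real n)^2" using bounds(1) n by simp
    then have "a < (real n)^2 / 10^6" using assms(2) unfolding a_def by (simp add: field_simps)
    moreover have "0 \<le> real n" by simp
    moreover have "2 * real n \<le> 3 * real (card (V - \<Union>M) + 2 * card M)"
      using parts n V_large assms(9) by simp
    ultimately have False
      by (rule few_missing_pairs_force_small_parts[OF bounds])
    then show ?thesis ..
  qed
qed

end
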